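(* For any circular interval graph $G$ and any vertex $v$ of $G$, $\deg_{G^2}(v)\le 4\omega(G)-4$.
   Context: A circular interval graph is obtained by taking a circle $\Sigma$, intervals $F_1,\dots,F_k\subseteq\Sigma$ each homeomorphic to $[0,1]$, a finite set of points of $\Sigma$ as vertex set, and joining two points iff both lie in some $F_i$. $G^2$ is the graph on $V(G)$ with distinct vertices adjacent iff at distance at most $2$ in $G$. $\omega$ is the clique number. *)

theory Defs
  imports "HOL-Analysis.Analysis"
begin

text \<open>Circular interval graph: circle = sphere c r (r > 0) in the plane (complex numbers),
  intervals F 0, ..., F (k-1) subsets of the circle each homeomorphic to [0,1],
  vertex set V a finite set of points of the circle; distinct u, v adjacent iff
  both lie in some F i.\<close>

definition circ_interval_adj :: "(nat \<Rightarrow> complex set) \<Rightarrow> nat \<Rightarrow> complex \<Rightarrow> complex \<Rightarrow> bool" where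
  "circ_interval_adj F k u v \<longleftrightarrow> u \<noteq> v \<and> (\<exists>i<k. u \<in> F i \<and> v \<in> F i)"

definition clique_number :: "'a set \<Rightarrow> ('a \<Rightarrow> 'a \<Rightarrow> bool) \<Rightarrow> nat" where
  "clique_number V E = Max {card C | C. C \<subseteq> V \<and> (\<forall>x\<in>C. \<forall>y\<in>C. x \<noteq> y \<longrightarrow> E x y)}"

definition square_degree :: "'a set \<Rightarrow> ('a \<Rightarrow> 'a \<Rightarrow> bool) \<Rightarrow> 'a \<Rightarrow> nat" where
  "square_degree V E v = card {w \<in> V. w \<noteq> v \<and> (E v w \<or> (\<exists>u\<in>V. E v u \<and> E u w))}"

end

theory Submission
  imports Defs
begin

text \<open>Measuring angles about the centre from the point antipodal to \<open>v\<close> orders \<open>V\<close>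
  linearly with \<open>v\<close> first. A connected arc avoiding two points \<open>p\<close>, \<open>q\<close> of the circle lies
  on one side of the chord \<open>pq\<close>, since the continuous signed distance from that line vanishes
  on the circle only at \<open>p\<close> and \<open>q\<close>; hence each interval meets \<open>V\<close> in an arc of the cyclic
  order. Going forward from \<open>v\<close>, the neighbours reached inside one interval through all
  intermediate vertices form, together with \<open>v\<close>, a clique; the vertices at distance two
  reached through them, together with the farthest such neighbour, lie in one interval. The
  same holds going backward, so the second neighbourhood of \<open>v\<close> is covered by four sets of
  size at most \<open>\<omega> - 1\<close>.\<close>

section \<open>Graphs whose edges come from cyclic intervals\<close>

text \<open>Read cyclically in the order given by \<open>h\<close>, the points of \<open>V\<close> in \<open>S\<close> form an arc:
  no \<open>a < b < c < d\<close> has \<open>a\<close>, \<open>c\<close> on one side of \<open>S\<close> and \<open>b\<close>, \<open>d\<close> on the other.\<close>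

definition cyclic_interval_on :: "'a set \<Rightarrow> ('a \<Rightarrow> real) \<Rightarrow> 'a set \<Rightarrow> bool" where
  "cyclic_interval_on V h S \<longleftrightarrow>
     (\<forall>a\<in>V. \<forall>b\<in>V. \<forall>c\<in>V. \<forall>d\<in>V. h a < h b \<longrightarrow> h b < h c \<longrightarrow> h c < h d \<longrightarrow>
        \<not> ((a \<in> S \<longleftrightarrow> c \<in> S) \<and> (b \<in> S \<longleftrightarrow> d \<in> S) \<and> (a \<in> S \<longleftrightarrow> b \<notin> S)))"

lemma cyclic_interval_onD:
  assumes "cyclic_interval_on V h S" "a \<in> V" "b \<in> V" "c \<in> V" "d \<in> V"
    and "h a < h b" "h b < h c" "h c < h d"
    and "a \<in> S \<longleftrightarrow> c \<in> S" "b \<in> S \<longleftrightarrow> d \<in> S" "a \<in> S \<longleftrightarrow> b \<notin> S"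
  shows False
  using assms unfolding cyclic_interval_on_def by blast

lemma card_le_clique_number:
  assumes "finite V" "C \<subseteq> V" "\<And>x y. x \<in> C \<Longrightarrow> y \<in> C \<Longrightarrow> x \<noteq> y \<Longrightarrow> E x y"
  shows "card C \<le> clique_number V E"
  unfolding clique_number_def
proof (rule Max_ge)
  show "finite {card C | C. C \<subseteq> V \<and> (\<forall>x\<in>C. \<forall>y\<in>C. x \<noteq> y \<longrightarrow> E x y)}"
    using assms(1) by (rule finite_subset[rotated, OF finite_imageI[OF finite_Pow_iff[THEN iffD2]]]) auto
qed (use assms in blast)

lemma obtain_max_image:
  fixes f :: "'a \<Rightarrow> 'b::linorder"
  assumes "finite X" "X \<noteq> {}"
  obtains m where "m \<in> X" "\<And>x. x \<in> X \<Longrightarrow> f x \<le> f m"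
proof -
  have "Max (f ` X) \<in> f ` X"
    using assms by simp
  then obtain m where "m \<in> X" "f m = Max (f ` X)"
    by auto
  with assms show ?thesis
    using that by simp
qed

locale circular_interval_system =
  fixes V :: "'a set" and E :: "'a \<Rightarrow> 'a \<Rightarrow> bool" and S :: "nat \<Rightarrow> 'a set" and k :: nat
    and h :: "'a \<Rightarrow> real" and v :: 'a
  assumes finite_V: "finite V" and v_in_V: "v \<in> V" and inj_on_h: "inj_on h V"
    and h_v_less: "\<And>w. w \<in> V \<Longrightarrow> w \<noteq> v \<Longrightarrow> h v < h w"
    and E_iff: "\<And>x y. E x y \<longleftrightarrow> x \<noteq> y \<and> (\<exists>i<k. x \<in> S i \<and> y \<in> S i)"
    and cyclic_interval_on_S: "\<And>i. i < k \<Longrightarrow> cyclic_interval_on V h (S i)"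
begin

lemma h_v_le: "w \<in> V \<Longrightarrow> h v \<le> h w"
  using h_v_less by fastforce

lemma h_less_if_le_ne: "x \<in> V \<Longrightarrow> y \<in> V \<Longrightarrow> h x \<le> h y \<Longrightarrow> x \<noteq> y \<Longrightarrow> h x < h y"
  using inj_on_h by (metis inj_on_eq_iff order_le_less)

lemma card_le_clique_number_minus_one:
  assumes "X \<subseteq> V" "y \<in> V - X" "i < k" "insert y X \<subseteq> S i"
  shows "card X \<le> clique_number V E - 1"
proof -
  have "card (insert y X) \<le> clique_number V E"
    using assms by (intro card_le_clique_number[OF finite_V]) (auto simp: E_iff)
  moreover have "finite X"
    using assms(1) finite_V finite_subset by blast
  ultimately show ?thesis
    using assms(2) by simp
qed

definition order_segment :: "'a \<Rightarrow> 'a \<Rightarrow> 'a set" where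
  "order_segment u w = {z \<in> V. h u \<le> h z \<and> h z \<le> h w}"

definition forward_nbrs :: "'a set" where
  "forward_nbrs = {w \<in> V - {v}. \<exists>i<k. order_segment v w \<subseteq> S i}"

definition forward_nbrs2 :: "'a set" where
  "forward_nbrs2 = {w \<in> V - forward_nbrs.
     \<exists>u\<in>forward_nbrs. h u \<le> h w \<and> (\<exists>j<k. order_segment u w \<subseteq> S j)}"

lemma forward_nbrs_downward_closed:
  assumes "w \<in> forward_nbrs" "z \<in> V - {v}" "h z \<le> h w"
  shows "z \<in> forward_nbrs"
  using assms unfolding forward_nbrs_def order_segment_def by fastforce

lemma card_forward_nbrs: "card forward_nbrs \<le> clique_number V E - 1"
proof (cases "forward_nbrs = {}")
  case False
  moreover have "finite forward_nbrs"
    using finite_V by (simp add: forward_nbrs_def)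
  ultimately obtain m where m: "m \<in> forward_nbrs" "\<And>x. x \<in> forward_nbrs \<Longrightarrow> h x \<le> h m"
    using obtain_max_image by blast
  then obtain i where "i < k" "order_segment v m \<subseteq> S i"
    by (auto simp: forward_nbrs_def)
  moreover have "insert v forward_nbrs \<subseteq> order_segment v m"
    using m v_in_V h_v_le by (auto simp: order_segment_def forward_nbrs_def)
  ultimately show ?thesis
    using v_in_V by (intro card_le_clique_number_minus_one) (auto simp: forward_nbrs_def)
qed simp

lemma forward_nbrs2_subset: "forward_nbrs2 \<subseteq> V - {v}"
  using h_v_less by (fastforce simp: forward_nbrs2_def forward_nbrs_def)

lemma card_forward_nbrs2: "card forward_nbrs2 \<le> clique_number V E - 1"
proof (cases "forward_nbrs2 = {}")
  case False
  moreover have "finite forward_nbrs2"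
    using finite_V by (simp add: forward_nbrs2_def)
  ultimately obtain w where w: "w \<in> forward_nbrs2" "\<And>x. x \<in> forward_nbrs2 \<Longrightarrow> h x \<le> h w"
    using obtain_max_image by blast
  then obtain u j where u: "u \<in> forward_nbrs" "h u \<le> h w" "j < k" "order_segment u w \<subseteq> S j"
    by (auto simp: forward_nbrs2_def)
  then have "forward_nbrs \<noteq> {}" "finite forward_nbrs"
    using finite_V by (auto simp: forward_nbrs_def)
  then obtain m where m: "m \<in> forward_nbrs" "\<And>x. x \<in> forward_nbrs \<Longrightarrow> h x \<le> h m"
    using obtain_max_image by blast
  have above_m: "h m < h x" if "x \<in> forward_nbrs2" for x
  proof (rule ccontr)
    assume "\<not> h m < h x"
    then have "x \<in> forward_nbrs"
      using forward_nbrs_downward_closed[OF m(1)] forward_nbrs2_subset that by force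
    with that show False
      by (simp add: forward_nbrs2_def)
  qed
  have "insert m forward_nbrs2 \<subseteq> order_segment u w"
  proof -
    have "h u \<le> h m" "h m \<le> h w"
      using m(2)[OF u(1)] above_m[OF w(1)] by auto
    moreover have "h m \<le> h x" "h x \<le> h w" if "x \<in> forward_nbrs2" for x
      using above_m[OF that] w(2)[OF that] by auto
    ultimately show ?thesis
      using m(1) forward_nbrs2_subset by (fastforce simp: order_segment_def forward_nbrs_def)
  qed
  with u(4) have "insert m forward_nbrs2 \<subseteq> S j"
    by blast
  moreover have "m \<in> V - forward_nbrs2"
    using m(1) by (auto simp: forward_nbrs_def forward_nbrs2_def)
  ultimately show ?thesis
    using forward_nbrs2_subset u(3) by (intro card_le_clique_number_minus_one) auto
qed simp

lemma forward_nbrs2I: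
  assumes "u \<in> forward_nbrs" "E u w" "\<not> E v w" "w \<in> V - {v}" "w \<notin> forward_nbrs"
  shows "w \<in> forward_nbrs2"
proof -
  obtain j where j: "j < k" "u \<in> S j" "w \<in> S j"
    using assms(2) by (auto simp: E_iff)
  have "v \<notin> S j"
    using assms(3,4) j by (auto simp: E_iff)
  have u_V: "u \<in> V" "u \<noteq> v"
    using assms(1) by (auto simp: forward_nbrs_def)
  have "h u < h w"
    using forward_nbrs_downward_closed[OF assms(1,4)] assms(5) by force
  have "z \<in> S j" if z: "z \<in> order_segment u w" for z
  proof (rule ccontr)
    assume "z \<notin> S j"
    with z j u_V assms(4) have "h u < h z" "h z < h w" "z \<in> V"
      by (auto simp: order_segment_def intro: h_less_if_le_ne)
    then show False
      using cyclic_interval_onD[OF cyclic_interval_on_S[OF j(1)] v_in_V u_V(1) _ _ h_v_less[OF u_V]]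
        j \<open>v \<notin> S j\<close> \<open>z \<notin> S j\<close> assms(4) by blast
  qed
  then have "order_segment u w \<subseteq> S j"
    by blast
  then show ?thesis
    unfolding forward_nbrs2_def
    using assms(1,4,5) less_imp_le[OF \<open>h u < h w\<close>] j(1) by blast
qed

text \<open>Reverses the order of \<open>V - {v}\<close> but keeps \<open>v\<close> least, so that the backward
  neighbours of \<open>v\<close> become forward ones.\<close>

definition reflected_order :: "'a \<Rightarrow> real" where
  "reflected_order w = (if w = v then - Max (h ` V) - 1 else - h w)"

lemma h_le_Max: "w \<in> V \<Longrightarrow> h w \<le> Max (h ` V)"
  using finite_V by simp

lemma reflected_order_le_iff:
  assumes "z \<in> V" "w \<in> V - {v}"
  shows "reflected_order z \<le> reflected_order w \<longleftrightarrow> z = v \<or> h w \<le> h z"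
  using assms h_le_Max[of w] by (auto simp: reflected_order_def)

lemma reflected_order_v_less: "w \<in> V \<Longrightarrow> w \<noteq> v \<Longrightarrow> reflected_order v < reflected_order w"
  using h_le_Max[of w] by (simp add: reflected_order_def)

lemma reflected_system: "circular_interval_system V E S k reflected_order v"
proof
  show "inj_on reflected_order V"
    using inj_on_h h_le_Max by (fastforce simp: inj_on_def reflected_order_def)
  show "reflected_order v < reflected_order w" if "w \<in> V" "w \<noteq> v" for w
    using that by (rule reflected_order_v_less)
  show "cyclic_interval_on V reflected_order (S i)" if "i < k" for i
    unfolding cyclic_interval_on_def
  proof (intro ballI impI notI)
    fix a b c d
    assume V: "a \<in> V" "b \<in> V" "c \<in> V" "d \<in> V"
      and order: "reflected_order a < reflected_order b" "reflected_order b < reflected_order c"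
        "reflected_order c < reflected_order d"
      and alt: "(a \<in> S i \<longleftrightarrow> c \<in> S i) \<and> (b \<in> S i \<longleftrightarrow> d \<in> S i) \<and> (a \<in> S i \<longleftrightarrow> b \<notin> S i)"
    have "reflected_order v \<le> reflected_order a"
      using reflected_order_v_less[OF V(1)] by fastforce
    then have "b \<noteq> v" "c \<noteq> v" "d \<noteq> v"
      using order by auto
    then have "h d < h c" "h c < h b"
      using order by (auto simp: reflected_order_def)
    show False
    proof (cases "a = v")
      case True
      show False
        using cyclic_interval_onD[OF cyclic_interval_on_S[OF that] v_in_V V(4,3,2)
            h_v_less[OF V(4) \<open>d \<noteq> v\<close>] \<open>h d < h c\<close> \<open>h c < h b\<close>] alt True by blast
    next
      case False
      then have "h b < h a"
        using order \<open>b \<noteq> v\<close> by (auto simp: reflected_order_def)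
      then show False
        using cyclic_interval_onD[OF cyclic_interval_on_S[OF that] V(4,3,2,1)
            \<open>h d < h c\<close> \<open>h c < h b\<close>] alt by blast
    qed
  qed
qed (use finite_V v_in_V E_iff in auto)

interpretation reflected: circular_interval_system V E S k reflected_order v
  by (rule reflected_system)

lemma reflected_forward_nbrsI:
  assumes "E v w" "w \<in> V" "w \<notin> forward_nbrs"
  shows "w \<in> reflected.forward_nbrs"
proof -
  obtain i where i: "i < k" "v \<in> S i" "w \<in> S i" and "w \<noteq> v"
    using assms(1) by (auto simp: E_iff)
  then obtain z where z: "z \<in> V" "h z \<le> h w" "z \<notin> S i"
    using assms(2,3) h_v_le by (auto simp: forward_nbrs_def order_segment_def)
  then have "h v < h z" "h z < h w"
    using i h_v_less[OF z(1)] h_less_if_le_ne[OF z(1) assms(2) z(2)] by auto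
  have "z' \<in> S i" if z': "z' \<in> reflected.order_segment v w" for z'
  proof (rule ccontr)
    assume "z' \<notin> S i"
    with z' i \<open>w \<noteq> v\<close> assms(2) have "z' \<in> V" "h w < h z'"
      by (auto simp: reflected.order_segment_def reflected_order_le_iff intro: h_less_if_le_ne)
    then show False
      using cyclic_interval_onD[OF cyclic_interval_on_S[OF i(1)] v_in_V z(1) assms(2)
          \<open>z' \<in> V\<close> \<open>h v < h z\<close> \<open>h z < h w\<close> \<open>h w < h z'\<close>] i z(3) \<open>z' \<notin> S i\<close> by blast
  qed
  then show ?thesis
    using assms(2) \<open>w \<noteq> v\<close> i(1) by (auto simp: reflected.forward_nbrs_def)
qed

lemma square_nbhd_subset:
  "{w \<in> V. w \<noteq> v \<and> (E v w \<or> (\<exists>u\<in>V. E v u \<and> E u w))}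
     \<subseteq> forward_nbrs \<union> reflected.forward_nbrs \<union> forward_nbrs2 \<union> reflected.forward_nbrs2"
proof
  fix w
  assume w: "w \<in> {w \<in> V. w \<noteq> v \<and> (E v w \<or> (\<exists>u\<in>V. E v u \<and> E u w))}"
  have nbr: "x \<in> forward_nbrs \<or> x \<in> reflected.forward_nbrs" if "E v x" "x \<in> V" for x
    using reflected_forward_nbrsI[OF that] by blast
  show "w \<in> forward_nbrs \<union> reflected.forward_nbrs \<union> forward_nbrs2 \<union> reflected.forward_nbrs2"
  proof (cases "E v w \<or> w \<in> forward_nbrs \<or> w \<in> reflected.forward_nbrs")
    case True
    then show ?thesis
      using w nbr by blast
  next
    case False
    with w obtain u where u: "u \<in> V" "E v u" "E u w"
      by blast
    from nbr[OF u(2,1)] show ?thesis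
      using forward_nbrs2I[OF _ u(3)] reflected.forward_nbrs2I[OF _ u(3)] False w by blast
  qed
qed

theorem square_degree_le: "square_degree V E v \<le> 4 * clique_number V E - 4"
proof -
  have "square_degree V E v
      \<le> card (forward_nbrs \<union> reflected.forward_nbrs \<union> forward_nbrs2 \<union> reflected.forward_nbrs2)"
    unfolding square_degree_def using square_nbhd_subset finite_V
    by (intro card_mono) (auto simp: forward_nbrs_def forward_nbrs2_def
        reflected.forward_nbrs_def reflected.forward_nbrs2_def)
  also have "\<dots> \<le> card forward_nbrs + card reflected.forward_nbrs + card forward_nbrs2
      + card reflected.forward_nbrs2"
    using card_Un_le[of "forward_nbrs \<union> reflected.forward_nbrs \<union> forward_nbrs2" reflected.forward_nbrs2]
      card_Un_le[of "forward_nbrs \<union> reflected.forward_nbrs" forward_nbrs2]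
      card_Un_le[of forward_nbrs reflected.forward_nbrs]
    by linarith
  also have "\<dots> \<le> 4 * clique_number V E - 4"
    using card_forward_nbrs card_forward_nbrs2 reflected.card_forward_nbrs reflected.card_forward_nbrs2
    by linarith
  finally show ?thesis .
qed

end

section \<open>Connected subsets of a circle\<close>

lemma sin_half_diff_pos:
  fixes x y :: real
  assumes "-pi < x" "x < y" "y \<le> pi"
  shows "sin ((y - x) / 2) > 0"
  using assms by (intro sin_gt_zero) auto

lemma sin_half_diff_neg:
  fixes x y :: real
  assumes "-pi < x" "x < y" "y \<le> pi"
  shows "sin ((x - y) / 2) < 0"
proof -
  have "sin ((x - y) / 2) = - sin ((y - x) / 2)"
    by (metis minus_diff_eq minus_divide_left sin_minus)
  then show ?thesis
    using sin_half_diff_pos[OF assms] by simp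
qed

lemma exp_chord_cross:
  fixes t b d :: real
  shows "Im ((exp (\<i> * t) - exp (\<i> * b)) * cnj (exp (\<i> * d) - exp (\<i> * b)))
     = -4 * sin ((t - b) / 2) * sin ((d - t) / 2) * sin ((d - b) / 2)"
proof -
  define T B D where "T = t / 2" and "B = b / 2" and "D = d / 2"
  have t: "t = 2 * T" and b: "b = 2 * B" and d: "d = 2 * D" by (auto simp: T_def B_def D_def)
  have half: "(t - b) / 2 = T - B" "(d - t) / 2 = D - T" "(d - b) / 2 = D - B"
    by (auto simp: t b d)
  show ?thesis
    unfolding half unfolding t b d
    by (simp add: Re_exp Im_exp sin_double cos_double sin_diff cos_diff)
      (use sin_cos_squared_add[of T] sin_cos_squared_add[of B] sin_cos_squared_add[of D] in algebra)
qed

text \<open>The angle of \<open>w\<close> about \<open>c\<close> measured from the point antipodal to \<open>v\<close>, so that \<open>v\<close>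
  itself gets the largest value \<open>pi\<close>.\<close>

definition circle_angle :: "complex \<Rightarrow> complex \<Rightarrow> complex \<Rightarrow> real" where
  "circle_angle c v w = Arg (- (w - c) / (v - c))"

lemma circle_angle_bounds: "-pi < circle_angle c v w" "circle_angle c v w \<le> pi"
  unfolding circle_angle_def by (rule mpi_less_Arg, rule Arg_le_pi)

lemma circle_angle_self:
  assumes "v \<noteq> c"
  shows "circle_angle c v v = pi"
proof -
  have "- (v - c) / (v - c) = complex_of_real (-1)"
    using assms by (simp add: field_simps)
  then show ?thesis
    using Arg_of_real[of "-1"] by (simp add: circle_angle_def)
qed

lemma sphere_eq_circle_angle:
  assumes "v \<in> sphere c r" "w \<in> sphere c r"
  shows "w = c - (v - c) * exp (\<i> * circle_angle c v w)"
proof (cases "v = c")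
  case True
  with assms show ?thesis by simp
next
  case False
  define z where "z = - (w - c) / (v - c)"
  have "norm (w - c) = norm (v - c)"
    using assms by (simp add: dist_norm norm_minus_commute)
  with False have "norm z = 1"
    by (simp add: z_def norm_divide norm_minus_commute)
  then have "z = exp (\<i> * Arg z)"
    using Arg_eq[of z] by force
  then have "z = exp (\<i> * circle_angle c v w)"
    by (simp add: circle_angle_def z_def)
  moreover have "- (w - c) = (v - c) * z"
    using False by (simp add: z_def)
  ultimately show ?thesis
    by (simp add: algebra_simps)
qed

lemma inj_on_circle_angle:
  assumes "v \<in> sphere c r"
  shows "inj_on (circle_angle c v) (sphere c r)"
  by (rule inj_onI) (metis assms sphere_eq_circle_angle)

lemma circle_angle_less_self:
  assumes "r > 0" "v \<in> sphere c r" "w \<in> sphere c r" "w \<noteq> v"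
  shows "circle_angle c v w < circle_angle c v v"
proof -
  have "circle_angle c v w \<noteq> circle_angle c v v"
    using assms(2-4) inj_on_circle_angle[OF assms(2)] by (metis inj_on_eq_iff)
  moreover have "v \<noteq> c"
    using assms(1,2) by auto
  ultimately show ?thesis
    using circle_angle_self circle_angle_bounds(2)[of c v w] by fastforce
qed

text \<open>Up to the factor \<open>cmod (q - p)\<close>, the signed distance of \<open>w\<close> from the line \<open>pq\<close>.\<close>

definition chord_side :: "complex \<Rightarrow> complex \<Rightarrow> complex \<Rightarrow> real" where
  "chord_side p q w = Im ((w - p) * cnj (q - p))"

lemma chord_side_circle_angle:
  assumes "v \<in> sphere c r" "w \<in> sphere c r" "p \<in> sphere c r" "q \<in> sphere c r"
  defines "t \<equiv> circle_angle c v w" and "b \<equiv> circle_angle c v p" and "d \<equiv> circle_angle c v q"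
  shows "chord_side p q w = -4 * r^2 * sin ((t - b) / 2) * sin ((d - t) / 2) * sin ((d - b) / 2)"
proof -
  have "w = c - (v - c) * exp (\<i> * t)" "p = c - (v - c) * exp (\<i> * b)"
    "q = c - (v - c) * exp (\<i> * d)"
    unfolding t_def b_def d_def using assms(2-4) by (auto intro: sphere_eq_circle_angle[OF assms(1)])
  then have "(w - p) * cnj (q - p)
      = ((v - c) * cnj (v - c)) * ((exp (\<i> * t) - exp (\<i> * b)) * cnj (exp (\<i> * d) - exp (\<i> * b)))"
    by (simp only:) (simp add: algebra_simps)
  also have "(v - c) * cnj (v - c) = of_real (r^2)"
    using assms(1) by (metis complex_norm_square dist_norm mem_sphere norm_minus_commute of_real_power)
  finally show ?thesis
    unfolding chord_side_def using exp_chord_cross[of t b d] by simp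
qed

lemma chord_side_neg_between:
  assumes "r \<noteq> 0" "v \<in> sphere c r" "w \<in> sphere c r" "p \<in> sphere c r" "q \<in> sphere c r"
    and "circle_angle c v p < circle_angle c v w" "circle_angle c v w < circle_angle c v q"
  shows "chord_side p q w < 0"
proof -
  have "sin ((circle_angle c v w - circle_angle c v p) / 2) > 0"
    "sin ((circle_angle c v q - circle_angle c v w) / 2) > 0"
    "sin ((circle_angle c v q - circle_angle c v p) / 2) > 0"
    using assms(6,7) circle_angle_bounds by (auto intro!: sin_half_diff_pos)
  then show ?thesis
    using assms(1) chord_side_circle_angle[OF assms(2-5)] by (simp add: mult_neg_pos)
qed

lemma chord_side_pos_outside:
  assumes "r \<noteq> 0" "v \<in> sphere c r" "w \<in> sphere c r" "p \<in> sphere c r" "q \<in> sphere c r"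
    and "circle_angle c v p < circle_angle c v q"
    and "circle_angle c v w < circle_angle c v p \<or> circle_angle c v q < circle_angle c v w"
  shows "chord_side p q w > 0"
proof -
  have pq: "sin ((circle_angle c v q - circle_angle c v p) / 2) > 0"
    using assms(6) circle_angle_bounds by (auto intro!: sin_half_diff_pos)
  from assms(7) show ?thesis
  proof
    assume "circle_angle c v w < circle_angle c v p"
    then have "sin ((circle_angle c v w - circle_angle c v p) / 2) < 0"
      "sin ((circle_angle c v q - circle_angle c v w) / 2) > 0"
      using assms(6) circle_angle_bounds by (auto intro!: sin_half_diff_pos sin_half_diff_neg)
    then show ?thesis
      using pq assms(1) chord_side_circle_angle[OF assms(2-5)] by (simp add: mult_neg_pos mult_pos_neg)
  next
    assume "circle_angle c v q < circle_angle c v w"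
    then have "sin ((circle_angle c v w - circle_angle c v p) / 2) > 0"
      "sin ((circle_angle c v q - circle_angle c v w) / 2) < 0"
      using assms(6) circle_angle_bounds by (auto intro!: sin_half_diff_pos sin_half_diff_neg)
    then show ?thesis
      using pq assms(1) chord_side_circle_angle[OF assms(2-5)] by (simp add: mult_neg_pos mult_pos_neg)
  qed
qed

lemma connected_circle_subset_between:
  assumes v: "v \<in> sphere c r" and F: "F \<subseteq> sphere c r" "connected F"
    and pq: "p \<in> sphere c r" "q \<in> sphere c r" "p \<notin> F" "q \<notin> F"
    and xy: "x \<in> F" "y \<in> F"
    and between: "circle_angle c v p < circle_angle c v x" "circle_angle c v x < circle_angle c v q"
  shows "circle_angle c v p < circle_angle c v y \<and> circle_angle c v y < circle_angle c v q"
proof (rule ccontr)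
  let ?\<theta> = "circle_angle c v"
  assume outside: "\<not> (?\<theta> p < ?\<theta> y \<and> ?\<theta> y < ?\<theta> q)"
  have "r \<noteq> 0"
    using pq xy F by auto
  have on_circle: "w \<in> sphere c r" if "w \<in> F" for w
    using that F by auto
  have angle_ne: "?\<theta> w \<noteq> ?\<theta> p" "?\<theta> w \<noteq> ?\<theta> q" if "w \<in> F" for w
    using that pq on_circle inj_on_circle_angle[OF v] by (metis inj_on_eq_iff)+
  have "chord_side p q x < 0"
    using chord_side_neg_between[OF \<open>r \<noteq> 0\<close> v on_circle pq(1,2)] xy between by blast
  moreover have "chord_side p q y > 0"
    using chord_side_pos_outside[OF \<open>r \<noteq> 0\<close> v on_circle pq(1,2)] xy between outside angle_ne
    by force
  moreover have "connected (chord_side p q ` F)"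
    unfolding chord_side_def by (intro connected_continuous_image[OF _ F(2)] continuous_intros)
  ultimately have "0 \<in> chord_side p q ` F"
    using xy unfolding connected_iff_interval by (meson imageI less_imp_le)
  then obtain w where "w \<in> F" "chord_side p q w = 0"
    by auto
  moreover have "?\<theta> w < ?\<theta> p \<or> ?\<theta> q < ?\<theta> w \<or> (?\<theta> p < ?\<theta> w \<and> ?\<theta> w < ?\<theta> q)"
    using angle_ne[OF \<open>w \<in> F\<close>] by linarith
  ultimately show False
    using chord_side_neg_between[OF \<open>r \<noteq> 0\<close> v on_circle pq(1,2)]
      chord_side_pos_outside[OF \<open>r \<noteq> 0\<close> v on_circle pq(1,2)] between
    by force
qed

lemma cyclic_interval_on_circle:
  assumes v: "v \<in> sphere c r" and "V \<subseteq> sphere c r" and F: "F \<subseteq> sphere c r" "connected F"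
  shows "cyclic_interval_on V (\<lambda>w. - circle_angle c v w) F"
  unfolding cyclic_interval_on_def
proof (intro ballI impI notI)
  let ?\<theta> = "circle_angle c v"
  fix w1 w2 w3 w4
  assume "w1 \<in> V" "w2 \<in> V" "w3 \<in> V" "w4 \<in> V"
  then have on_circle: "w1 \<in> sphere c r" "w2 \<in> sphere c r" "w3 \<in> sphere c r" "w4 \<in> sphere c r"
    using assms(2) by auto
  assume "- ?\<theta> w1 < - ?\<theta> w2" "- ?\<theta> w2 < - ?\<theta> w3" "- ?\<theta> w3 < - ?\<theta> w4"
  then have order: "?\<theta> w4 < ?\<theta> w3" "?\<theta> w3 < ?\<theta> w2" "?\<theta> w2 < ?\<theta> w1"
    by auto
  assume "(w1 \<in> F \<longleftrightarrow> w3 \<in> F) \<and> (w2 \<in> F \<longleftrightarrow> w4 \<in> F) \<and> (w1 \<in> F \<longleftrightarrow> w2 \<notin> F)"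
  then consider "w1 \<in> F" "w3 \<in> F" "w2 \<notin> F" "w4 \<notin> F" | "w2 \<in> F" "w4 \<in> F" "w1 \<notin> F" "w3 \<notin> F"
    by blast
  then show False
  proof cases
    case 1
    from connected_circle_subset_between[OF v F on_circle(4,2) 1(4,3,2,1) order(1,2)]
    show False
      using order(3) by linarith
  next
    case 2
    from connected_circle_subset_between[OF v F on_circle(3,1) 2(4,3,1,2) order(2,3)]
    show False
      using order(1) by linarith
  qed
qed

theorem mainTheorem9:
  fixes c :: complex and r :: real and k :: nat
    and F :: "nat \<Rightarrow> complex set" and V :: "complex set" and v :: complex
  assumes "r > 0"
    and "\<And>i. i < k \<Longrightarrow> F i \<subseteq> sphere c r"
    and "\<And>i. i < k \<Longrightarrow> F i homeomorphic {0..1::real}"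
    and "finite V" and "V \<subseteq> sphere c r"
    and "v \<in> V"
  shows "square_degree V (circ_interval_adj F k) v
           \<le> 4 * clique_number V (circ_interval_adj F k) - 4"
proof -
  have v: "v \<in> sphere c r"
    using assms(5,6) by auto
  interpret circular_interval_system V "circ_interval_adj F k" F k "\<lambda>w. - circle_angle c v w" v
  proof
    show "inj_on (\<lambda>w. - circle_angle c v w) V"
      using inj_on_subset[OF inj_on_circle_angle[OF v] assms(5)] by (simp add: inj_on_def)
    show "- circle_angle c v v < - circle_angle c v w" if "w \<in> V" "w \<noteq> v" for w
      using circle_angle_less_self[OF assms(1) v _ that(2)] that(1) assms(5) by auto
    show "cyclic_interval_on V (\<lambda>w. - circle_angle c v w) (F i)" if "i < k" for i
    proof -
      have "connected (F i)"
        using homeomorphic_connectedness[OF assms(3)[OF that]] by simp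
      then show ?thesis
        by (rule cyclic_interval_on_circle[OF v assms(5) assms(2)[OF that]])
    qed
  qed (use assms(4,6) in \<open>auto simp: circ_interval_adj_def\<close>)
  show ?thesis
    by (rule square_degree_le)
qed

end
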